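(* Let $\mathcal{A}=(\mathcal{A}''_4)^*$, let $\alpha$, $e_{11}$, $e_{21}$ be as below, and let $T$ be the Hopf subalgebra of $\mathcal{A}$ generated by $\alpha$ and $y:=e_{11}e_{21}$ (it is isomorphic to the Sweedler algebra $T_{-1}$). (i) If $\pi:\mathcal{A}\to T_{-1}$ is a morphism of Hopf algebras, then $\pi(\mathcal{A})\subseteq k[G(T_{-1})]$ and $T\subseteq\mathcal{A}^{\mathrm{co}\,\pi}$. (ii) $\mathcal{A}$ fits into an exact sequence of Hopf algebras $T\hookrightarrow\mathcal{A}\overset{\psi}{\twoheadrightarrow} k[C_2]$, where $C_2$ is the cyclic group of order $2$.
   Context: $k$ algebraically closed of characteristic $0$. $\mathcal{A}''_4$ is generated by $g,x$ with $g^4=1$, $x^2=g^2-1$, $gx=-xg$, $\Delta(g)=g\otimes g$, $\Delta(x)=x\otimes g+1\otimes x$; $\mathcal{A}$ is its dual. $\alpha\in\mathcal{A}$ is the character $\alpha(g)=-1,\alpha(x)=0$; $e_{jl}=E_{jl}\circ\rho$ where $\rho(g)=\mathrm{diag}(i,-i)$, $\rho(x)=\begin{pmatrix}0&2\\-1&0\end{pmatrix}$ and $E_{jl}$ are matrix coordinate functions. $T_{-1}$ is the Sweedler algebra generated by $g,x$ with $g^2=1,x^2=0,xg=-gx$, $g$ group-like, $\Delta(x)=x\otimes g+1\otimes x$. $H^{\mathrm{co}\,\pi}=\{h:(\mathrm{id}\otimes\pi)\Delta(h)=h\otimes1\}$. Exact sequence $A\hookrightarrow C\overset{\pi}{\twoheadrightarrow}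 B$: $\imath$ injective, $\pi$ surjective, $\pi\imath=\varepsilon$, $\ker\pi=A^+C$, $A=C^{\mathrm{co}\,\pi}$. *)

theory Defs
  imports "HOL-Computational_Algebra.Polynomial" "HOL-Library.Numeral_Type"
begin

text \<open>A finite-dimensional Hopf algebra over a field 'k is presented on a finite basis 'b.
Elements are coordinate vectors 'b => 'k; the tensor square has basis 'b x 'b.
mc b1 b2 b = coefficient of b in the product b1*b2; uc = coordinates of 1;
dc b b1 b2 = coefficient of b1 (x) b2 in Delta(b); ec b = counit of b;
sc b b' = coefficient of b' in S(b).\<close>

record ('b, 'k) hopf_sc =
  mc :: "'b \<Rightarrow> 'b \<Rightarrow> 'b \<Rightarrow> 'k"
  uc :: "'b \<Rightarrow> 'k"
  dc :: "'b \<Rightarrow> 'b \<Rightarrow> 'b \<Rightarrow> 'k"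
  ec :: "'b \<Rightarrow> 'k"
  sc :: "'b \<Rightarrow> 'b \<Rightarrow> 'k"

definition hmult :: "('b::finite, 'k::field) hopf_sc \<Rightarrow> ('b \<Rightarrow> 'k) \<Rightarrow> ('b \<Rightarrow> 'k) \<Rightarrow> ('b \<Rightarrow> 'k)" where
  "hmult H u v = (\<lambda>b. \<Sum>b1\<in>UNIV. \<Sum>b2\<in>UNIV. u b1 * v b2 * mc H b1 b2 b)"

definition hone :: "('b::finite, 'k::field) hopf_sc \<Rightarrow> ('b \<Rightarrow> 'k)" where
  "hone H = uc H"

definition hcomult :: "('b::finite, 'k::field) hopf_sc \<Rightarrow> ('b \<Rightarrow> 'k) \<Rightarrow> ('b \<times> 'b \<Rightarrow> 'k)" where
  "hcomult H u = (\<lambda>(b1, b2). \<Sum>b\<in>UNIV. u b * dc H b b1 b2)"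

definition hcounit :: "('b::finite, 'k::field) hopf_sc \<Rightarrow> ('b \<Rightarrow> 'k) \<Rightarrow> 'k" where
  "hcounit H u = (\<Sum>b\<in>UNIV. u b * ec H b)"

definition hantipode :: "('b::finite, 'k::field) hopf_sc \<Rightarrow> ('b \<Rightarrow> 'k) \<Rightarrow> ('b \<Rightarrow> 'k)" where
  "hantipode H u = (\<lambda>b'. \<Sum>b\<in>UNIV. u b * sc H b b')"

definition dual_hopf :: "('b::finite, 'k::field) hopf_sc \<Rightarrow> ('b, 'k) hopf_sc" where
  "dual_hopf H = \<lparr> mc = (\<lambda>b1 b2 b. dc H b b1 b2), uc = ec H,
                   dc = (\<lambda>b b1 b2. mc H b1 b2 b), ec = uc H,
                   sc = (\<lambda>b b'. sc H b' b) \<rparr>"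

definition basisvec :: "'b \<Rightarrow> ('b \<Rightarrow> 'k::field)" where
  "basisvec b = (\<lambda>b'. if b' = b then 1 else 0)"

definition tens :: "('b \<Rightarrow> 'k::field) \<Rightarrow> ('c \<Rightarrow> 'k) \<Rightarrow> ('b \<times> 'c \<Rightarrow> 'k)" where
  "tens u v = (\<lambda>(b, c). u b * v c)"

definition tmap :: "(('b::finite \<Rightarrow> 'k::field) \<Rightarrow> ('c \<Rightarrow> 'k)) \<Rightarrow> (('d::finite \<Rightarrow> 'k) \<Rightarrow> ('e \<Rightarrow> 'k))
                     \<Rightarrow> ('b \<times> 'd \<Rightarrow> 'k) \<Rightarrow> ('c \<times> 'e \<Rightarrow> 'k)" where
  "tmap f h t = (\<lambda>(c, e). \<Sum>(b, d)\<in>UNIV. t (b, d) * f (basisvec b) c * h (basisvec d) e)"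

definition lspan :: "('b \<Rightarrow> 'k::field) set \<Rightarrow> ('b \<Rightarrow> 'k) set" where
  "lspan S = {v. \<exists>F c. finite F \<and> F \<subseteq> S \<and> v = (\<lambda>x. \<Sum>u\<in>F. c u * u x)}"

definition lsubspace :: "('b \<Rightarrow> 'k::field) set \<Rightarrow> bool" where
  "lsubspace K \<longleftrightarrow> (\<lambda>_. 0) \<in> K \<and> (\<forall>u\<in>K. \<forall>v\<in>K. (\<lambda>x. u x + v x) \<in> K)
                 \<and> (\<forall>c. \<forall>u\<in>K. (\<lambda>x. c * u x) \<in> K)"

definition is_linear :: "(('b \<Rightarrow> 'k::field) \<Rightarrow> ('c \<Rightarrow> 'k)) \<Rightarrow> bool" where
  "is_linear f \<longleftrightarrow> (\<forall>u v. f (\<lambda>x. u x + v x) = (\<lambda>y. f u y + f v y))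
                 \<and> (\<forall>c u. f (\<lambda>x. c * u x) = (\<lambda>y. c * f u y))"

text \<open>Morphism of Hopf algebras (= morphism of bialgebras; it then commutes with antipodes).\<close>
definition hopf_mor :: "('b::finite, 'k::field) hopf_sc \<Rightarrow> ('c::finite, 'k) hopf_sc
                        \<Rightarrow> (('b \<Rightarrow> 'k) \<Rightarrow> ('c \<Rightarrow> 'k)) \<Rightarrow> bool" where
  "hopf_mor H1 H2 f \<longleftrightarrow> is_linear f
     \<and> (\<forall>u v. f (hmult H1 u v) = hmult H2 (f u) (f v))
     \<and> f (hone H1) = hone H2
     \<and> (\<forall>u. hcomult H2 (f u) = tmap f f (hcomult H1 u))
     \<and> (\<forall>u. hcounit H2 (f u) = hcounit H1 u)"

definition hopf_subalg :: "('b::finite, 'k::field) hopf_sc \<Rightarrow> ('b \<Rightarrow> 'k) set \<Rightarrow> bool" where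
  "hopf_subalg H K \<longleftrightarrow> lsubspace K \<and> hone H \<in> K
     \<and> (\<forall>u\<in>K. \<forall>v\<in>K. hmult H u v \<in> K)
     \<and> (\<forall>u\<in>K. hcomult H u \<in> lspan {tens v w | v w. v \<in> K \<and> w \<in> K})
     \<and> (\<forall>u\<in>K. hantipode H u \<in> K)"

definition hopf_gen :: "('b::finite, 'k::field) hopf_sc \<Rightarrow> ('b \<Rightarrow> 'k) set \<Rightarrow> ('b \<Rightarrow> 'k) set" where
  "hopf_gen H X = \<Inter> {K. hopf_subalg H K \<and> X \<subseteq> K}"

definition coinv :: "('b::finite, 'k::field) hopf_sc \<Rightarrow> ('c::finite, 'k) hopf_sc
                     \<Rightarrow> (('b \<Rightarrow> 'k) \<Rightarrow> ('c \<Rightarrow> 'k)) \<Rightarrow> ('b \<Rightarrow> 'k) set" where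
  "coinv H B p = {h. tmap (\<lambda>u. u) p (hcomult H h) = tens h (hone B)}"

definition grouplike :: "('b::finite, 'k::field) hopf_sc \<Rightarrow> ('b \<Rightarrow> 'k) \<Rightarrow> bool" where
  "grouplike H u \<longleftrightarrow> u \<noteq> (\<lambda>_. 0) \<and> hcomult H u = tens u u"

definition kG :: "('b::finite, 'k::field) hopf_sc \<Rightarrow> ('b \<Rightarrow> 'k) set" where
  "kG H = lspan {u. grouplike H u}"

definition exact_seq_incl :: "('b::finite, 'k::field) hopf_sc \<Rightarrow> ('b \<Rightarrow> 'k) set
      \<Rightarrow> ('c::finite, 'k) hopf_sc \<Rightarrow> (('b \<Rightarrow> 'k) \<Rightarrow> ('c \<Rightarrow> 'k)) \<Rightarrow> bool" where
  "exact_seq_incl H K B p \<longleftrightarrow> hopf_subalg H K \<and> hopf_mor H B p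
     \<and> surj p
     \<and> (\<forall>t\<in>K. p t = (\<lambda>c. hcounit H t * hone B c))
     \<and> {u. p u = (\<lambda>_. 0)} = lspan {hmult H t a | t a. t \<in> K \<and> hcounit H t = 0}
     \<and> K = coinv H B p"

text \<open>A''_4: basis g^i x^j, indexed by (i, j) with i :: 4 (exponent mod 4), j = True iff x occurs.
  Relations g^4 = 1, x^2 = g^2 - 1, g x = - x g, so x g^k = (-1)^k g^k x.\<close>

definition odd4 :: "4 \<Rightarrow> bool" where
  "odd4 k \<longleftrightarrow> k = 1 \<or> k = 3"

definition sgn4 :: "bool \<Rightarrow> 4 \<Rightarrow> 'k::field" where
  "sgn4 j k = (if j \<and> odd4 k then -1 else 1)"

definition A4pp :: "(4 \<times> bool, 'k::field) hopf_sc" where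
  "A4pp = \<lparr>
     mc = (\<lambda>(i, j) (k, l) (m, n).
            if j \<and> l then
              \<comment> \<open>g^i x g^k x = (-1)^k (g^(i+k+2) - g^(i+k))\<close>
              (if n then 0 else sgn4 True k * ((if m = i + k + 2 then 1 else 0) - (if m = i + k then 1 else 0)))
            else
              \<comment> \<open>g^i x^j g^k x^l = (-1)^(jk) g^(i+k) x^(j+l)\<close>
              (if m = i + k \<and> n = (j \<or> l) then sgn4 j k else 0)),
     uc = basisvec (0, False),
     dc = (\<lambda>(i, j) (a, p) (c, q).
            if \<not> j then (if a = i \<and> p = False \<and> c = i \<and> q = False then 1 else 0)
            else \<comment> \<open>Delta(g^i x) = g^i x (x) g^(i+1) + g^i (x) g^i x\<close>
              (if a = i \<and> p = True \<and> c = i + 1 \<and> q = False then 1 else 0)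
              + (if a = i \<and> p = False \<and> c = i \<and> q = True then 1 else 0)),
     ec = (\<lambda>(i, j). if j then 0 else 1),
     sc = (\<lambda>(i, j) (m, n).
            if \<not> j then (if m = - i \<and> n = False then 1 else 0)
            else \<comment> \<open>S(g^i x) = (-1)^i g^(-i-1) x\<close>
              (if m = - i - 1 \<and> n = True then (if odd4 i then -1 else 1) else 0)) \<rparr>"

text \<open>The dual Hopf algebra A = (A''_4)^*; its elements are functionals on A''_4, represented
  by their values on the basis g^i x^j.\<close>
definition Adual :: "(4 \<times> bool, 'k::field) hopf_sc" where
  "Adual = dual_hopf A4pp"

text \<open>The character alpha: alpha(g) = -1, alpha(x) = 0, so alpha(g^i x^j) = (-1)^i [j = 0].\<close>
definition alpha :: "4 \<times> bool \<Rightarrow> 'k::field" where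
  "alpha = (\<lambda>(i, j). if j then 0 else (if odd4 i then -1 else 1))"

text \<open>2x2 matrices, indices False = 1, True = 2.\<close>
type_synonym 'k mat2 = "bool \<Rightarrow> bool \<Rightarrow> 'k"

definition mmul :: "'k::field mat2 \<Rightarrow> 'k mat2 \<Rightarrow> 'k mat2" where
  "mmul M N = (\<lambda>r c. \<Sum>m\<in>UNIV. M r m * N m c)"

definition mid :: "'k::field mat2" where
  "mid = (\<lambda>r c. if r = c then 1 else 0)"

primrec mpow :: "'k::field mat2 \<Rightarrow> nat \<Rightarrow> 'k mat2" where
  "mpow M 0 = mid"
| "mpow M (Suc n) = mmul M (mpow M n)"

definition imag :: "'k::field" where
  "imag = (SOME z. z * z = - 1)"

definition rho_g :: "'k::field mat2" where
  "rho_g = (\<lambda>r c. if r \<noteq> c then 0 else if r = False then imag else - imag)"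

definition rho_x :: "'k::field mat2" where
  "rho_x = (\<lambda>r c. if r = False \<and> c = True then 2 else if r = True \<and> c = False then -1 else 0)"

definition rho :: "4 \<times> bool \<Rightarrow> 'k::field mat2" where
  "rho = (\<lambda>(i, j). mmul (mpow rho_g (nat (Rep_bit0 i))) (if j then rho_x else mid))"

definition ecoord :: "bool \<Rightarrow> bool \<Rightarrow> 4 \<times> bool \<Rightarrow> 'k::field" where
  "ecoord r c = (\<lambda>b. rho b r c)"

definition e11 :: "4 \<times> bool \<Rightarrow> 'k::field" where "e11 = ecoord False False"
definition e21 :: "4 \<times> bool \<Rightarrow> 'k::field" where "e21 = ecoord True False"

text \<open>Sweedler algebra T_{-1}: basis g^i x^j, i :: 2, j :: bool; g^2 = 1, x^2 = 0, xg = -gx.\<close>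
definition Tsw :: "(2 \<times> bool, 'k::field) hopf_sc" where
  "Tsw = \<lparr>
     mc = (\<lambda>(i, j) (k, l) (m, n).
            if j \<and> l then 0
            else (if m = i + k \<and> n = (j \<or> l) then (if j \<and> k = 1 then -1 else 1) else 0)),
     uc = basisvec (0, False),
     dc = (\<lambda>(i, j) (a, p) (c, q).
            if \<not> j then (if a = i \<and> p = False \<and> c = i \<and> q = False then 1 else 0)
            else (if a = i \<and> p = True \<and> c = i + 1 \<and> q = False then 1 else 0)
              + (if a = i \<and> p = False \<and> c = i \<and> q = True then 1 else 0)),
     ec = (\<lambda>(i, j). if j then 0 else 1),
     sc = (\<lambda>(i, j) (m, n).
            if \<not> j then (if m = i \<and> n = False then 1 else 0)
            else \<comment> \<open>S(g^i x) = (-1)^i g^(i+1) x\<close>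
              (if m = i + 1 \<and> n = True then (if i = 1 then -1 else 1) else 0)) \<rparr>"

text \<open>Group algebra k[G] of a finite group G (written additively), basis = group elements.\<close>
definition group_alg :: "('g::{finite, group_add}, 'k::field) hopf_sc" where
  "group_alg = \<lparr>
     mc = (\<lambda>a b c. if c = a + b then 1 else 0),
     uc = basisvec 0,
     dc = (\<lambda>a b c. if b = a \<and> c = a then 1 else 0),
     ec = (\<lambda>_. 1),
     sc = (\<lambda>a b. if b = - a then 1 else 0) \<rparr>"

end

theory Submission
  imports Defs
begin

(* Part (ii).  The Hopf subalgebra T generated by alpha and y = e11 e21 is the space of functionals
   invariant under multiplication by g^2 (it is spanned by 1, alpha, y, alpha y).  The map psi,
   restriction of a functional to the group-likes {1, g^2} written in the idempotent basis of
   k[C_2], is a surjective Hopf map with kernel T^+ A and coinvariants T.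

   Part (i).  For a Hopf map p : A -> T_{-1}, the rows of the matrix of p are elements of
   A''_4 = A^*; multiplicativity and comultiplicativity of p swap roles on the rows.  The row
   gamma belonging to the group-like of T_{-1}^* is then a group-like of A''_4 with gamma^2 = 1,
   so gamma is 1 or g^2; the row Z belonging to the skew-primitive is (1, gamma)-skew-primitive
   with Z^2 = 0, hence Z = 0.  Thus p is the restriction to {1, g^m}, m in {0, 2}, and both
   claims follow by direct computation. *)

lemma four_cases: "(x::4) = 0 \<or> x = 1 \<or> x = 2 \<or> x = 3"
proof (induct x)
  case (of_int z)
  then have "z = 0 \<or> z = 1 \<or> z = 2 \<or> z = 3" by auto
  then show ?case by auto
qed

lemma two_cases: "(x::2) = 0 \<or> x = 1"
proof (induct x)
  case (of_int z)
  then have "z = 0 \<or> z = 1" by auto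
  then show ?case by auto
qed

lemma sum_UNIV_4: "(\<Sum>x\<in>UNIV. (f::4 \<Rightarrow> 'a::comm_monoid_add) x) = f 0 + f 1 + f 2 + f 3"
proof -
  have U: "(UNIV::4 set) = {0,1,2,3}" using four_cases by auto
  show ?thesis unfolding U by (simp add: add.assoc)
qed

lemma sum_UNIV_2: "(\<Sum>x\<in>UNIV. (f::2 \<Rightarrow> 'a::comm_monoid_add) x) = f 0 + f 1"
proof -
  have U: "(UNIV::2 set) = {0,1}" using two_cases by auto
  show ?thesis unfolding U by simp
qed

lemma sum_UNIV_bool: "(\<Sum>x\<in>UNIV. (f::bool \<Rightarrow> 'a::comm_monoid_add) x) = f False + f True"
  by (simp add: UNIV_bool add.commute)

lemma sum_UNIV_prod:
  "(\<Sum>x\<in>UNIV. (f::'a::finite \<times> 'b::finite \<Rightarrow> 'c::comm_monoid_add) x) = (\<Sum>a\<in>UNIV. \<Sum>b\<in>UNIV. f (a, b))"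
  using sum.cartesian_product[of "\<lambda>a b. f (a, b)" UNIV UNIV] by simp

lemma num4_simps [simp]: "(4::4) = 0" "(5::4) = 1" "(6::4) = 2" "(-1::4) = 3" "(-2::4) = 2" "(-3::4) = 1"
  "(2::2) = 0" "(3::2) = 1"
  by simp_all

lemma odd4_simps [simp]: "odd4 0 = False" "odd4 1" "odd4 2 = False" "odd4 3"
  by (simp_all add: odd4_def)

lemma sgn4_simps [simp]: "sgn4 False k = 1" "sgn4 j 0 = 1" "sgn4 True 1 = -1" "sgn4 j 2 = 1" "sgn4 True 3 = -1"
  by (simp_all add: sgn4_def)

lemma mult_if_zero:
  "x * (if P then y else 0) = (if P then x * y else (0::'a::semiring_0))"
  "(if P then y else 0) * x = (if P then y * x else (0::'a::semiring_0))"
  by simp_all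

lemma sum_if_const: "(\<Sum>x\<in>A. if P then f x else 0) = (if P then (\<Sum>x\<in>A. f x) else (0::'a::comm_monoid_add))"
  by simp

lemma lspan_base: "x \<in> S \<Longrightarrow> x \<in> lspan S"
  unfolding lspan_def by (intro CollectI exI[of _ "{x}"] exI[of _ "\<lambda>_. 1"]) auto

lemma lspan_add:
  assumes "x \<in> lspan S" "y \<in> lspan S"
  shows "(\<lambda>z. x z + y z) \<in> lspan S"
proof -
  obtain F1 c1 where 1: "finite F1" "F1 \<subseteq> S" "x = (\<lambda>z. \<Sum>u\<in>F1. c1 u * u z)"
    using assms(1) unfolding lspan_def by blast
  obtain F2 c2 where 2: "finite F2" "F2 \<subseteq> S" "y = (\<lambda>z. \<Sum>u\<in>F2. c2 u * u z)"
    using assms(2) unfolding lspan_def by blast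
  define c where "c u = (if u \<in> F1 then c1 u else 0) + (if u \<in> F2 then c2 u else 0)" for u
  \<comment> \<open>extending both coefficient families by zero to the union of their supports\<close>
  have "x z + y z = (\<Sum>u\<in>F1 \<union> F2. c u * u z)" for z
  proof -
    have cu: "c u * u z = (if u \<in> F1 then c1 u * u z else 0) + (if u \<in> F2 then c2 u * u z else 0)" for u
      by (simp add: c_def distrib_right)
    have "(\<Sum>u\<in>F1 \<union> F2. c u * u z)
        = (\<Sum>u\<in>F1 \<union> F2. if u \<in> F1 then c1 u * u z else 0) + (\<Sum>u\<in>F1 \<union> F2. if u \<in> F2 then c2 u * u z else 0)"
      by (simp only: cu sum.distrib)
    also have "\<dots> = (\<Sum>u\<in>F1. c1 u * u z) + (\<Sum>u\<in>F2. c2 u * u z)"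
      using 1(1) 2(1) by (simp add: sum.inter_restrict[symmetric] Int_absorb1 Int_absorb2)
    finally show ?thesis using 1(3) 2(3) by simp
  qed
  then show ?thesis
    unfolding lspan_def using 1(1,2) 2(1,2) by (intro CollectI exI[of _ "F1 \<union> F2"] exI[of _ c]) auto
qed

lemma lspan_scale:
  assumes "x \<in> lspan S"
  shows "(\<lambda>z. a * x z) \<in> lspan S"
proof -
  obtain F c where F: "finite F" "F \<subseteq> S" "x = (\<lambda>z. \<Sum>u\<in>F. c u * u z)"
    using assms unfolding lspan_def by blast
  then have "(\<lambda>z. a * x z) = (\<lambda>z. \<Sum>u\<in>F. (a * c u) * u z)"
    by (simp add: sum_distrib_left mult.assoc)
  then show ?thesis
    unfolding lspan_def using F(1,2) by (intro CollectI exI[of _ F] exI[of _ "\<lambda>u. a * c u"]) simp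
qed

lemma lsubspace_add: "lsubspace K \<Longrightarrow> u \<in> K \<Longrightarrow> v \<in> K \<Longrightarrow> (\<lambda>x. u x + v x) \<in> K"
  unfolding lsubspace_def by blast

lemma lsubspace_scale: "lsubspace K \<Longrightarrow> u \<in> K \<Longrightarrow> (\<lambda>x. c * u x) \<in> K"
  unfolding lsubspace_def by blast

lemma lspan_in_subspace:
  assumes K: "lsubspace K" and S: "S \<subseteq> K"
  shows "lspan S \<subseteq> K"
proof
  fix v assume "v \<in> lspan S"
  then obtain F c where F: "finite F" "F \<subseteq> S" "v = (\<lambda>z. \<Sum>u\<in>F. c u * u z)"
    unfolding lspan_def by blast
  have "F \<subseteq> S \<Longrightarrow> (\<lambda>z. \<Sum>u\<in>F. c u * u z) \<in> K" using F(1)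
  proof (induct F rule: finite_induct)
    case empty
    then show ?case using K by (simp add: lsubspace_def)
  next
    case (insert x F)
    then have "(\<lambda>z. c x * x z) \<in> K" "(\<lambda>z. \<Sum>u\<in>F. c u * u z) \<in> K"
      using K S by (auto intro: lsubspace_scale)
    then show ?case using lsubspace_add[OF K] insert(1,2) by simp
  qed
  then show "v \<in> K" using F by simp
qed

lemma linear_sum:
  assumes f: "is_linear f" and F: "finite F"
  shows "f (\<lambda>x. \<Sum>a\<in>F. c a * g a x) = (\<lambda>y. \<Sum>a\<in>F. c a * f (g a) y)"
  using F
proof (induct F rule: finite_induct)
  case empty
  have "f (\<lambda>x. 0 * u x) = (\<lambda>y. 0 * f u y)" for u using f unfolding is_linear_def by blast
  from this[of "\<lambda>x. 0"] show ?case by simp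
next
  case (insert a F)
  have add: "f (\<lambda>x. u x + v x) = (\<lambda>y. f u y + f v y)"
   and scale: "f (\<lambda>x. c * u x) = (\<lambda>y. c * f u y)" for u v c
    using f unfolding is_linear_def by blast+
  have "f (\<lambda>x. \<Sum>a\<in>insert a F. c a * g a x) = f (\<lambda>x. (\<lambda>x. c a * g a x) x + (\<lambda>x. \<Sum>a\<in>F. c a * g a x) x)"
    using insert(1,2) by simp
  also have "\<dots> = (\<lambda>y. c a * f (g a) y + (\<Sum>a\<in>F. c a * f (g a) y))"
    by (simp only: add scale insert(3))
  finally show ?case using insert(1,2) by simp
qed

lemma linear_expand:
  assumes "is_linear (f::('b::finite \<Rightarrow> 'k::field) \<Rightarrow> _)"
  shows "f u t = (\<Sum>a\<in>UNIV. u a * f (basisvec a) t)"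
proof -
  have "u = (\<lambda>x. \<Sum>a\<in>UNIV. u a * basisvec a x)"
    by (rule ext) (simp add: basisvec_def mult_if_zero cong: if_cong)
  then have "f u = f (\<lambda>x. \<Sum>a\<in>UNIV. u a * basisvec a x)" by simp
  also have "\<dots> = (\<lambda>t. \<Sum>a\<in>UNIV. u a * f (basisvec a) t)" using assms by (rule linear_sum) simp
  finally show ?thesis by simp
qed

lemma sum_basisvec: "(\<Sum>a\<in>UNIV. u a * basisvec b a) = (u (b::'b::finite) :: 'k::field)"
  by (simp add: basisvec_def mult_if_zero)

lemma tmap_id_slice:
  assumes "is_linear f"
  shows "tmap (\<lambda>u. u) f w (b1, t) = f (\<lambda>d. w (b1, d)) t"
proof -
  have "tmap (\<lambda>u. u) f w (b1, t) = (\<Sum>b\<in>UNIV. \<Sum>d\<in>UNIV. w (b, d) * basisvec b b1 * f (basisvec d) t)"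
    by (simp add: tmap_def sum_UNIV_prod)
  also have "\<dots> = (\<Sum>b\<in>UNIV. if b = b1 then (\<Sum>d\<in>UNIV. w (b1, d) * f (basisvec d) t) else 0)"
    by (rule sum.cong) (auto simp: basisvec_def)
  also have "\<dots> = (\<Sum>d\<in>UNIV. w (b1, d) * f (basisvec d) t)"
    by simp
  also have "\<dots> = f (\<lambda>d. w (b1, d)) t"
    by (simp only: linear_expand[OF assms, of "\<lambda>d. w (b1, d)" t])
  finally show ?thesis .
qed

lemma hmult_add_left: "hmult H (\<lambda>b. f b + g b) h a = hmult H f h a + hmult H g h a"
  by (simp add: hmult_def distrib_right sum.distrib)
lemma hmult_add_right: "hmult H h (\<lambda>b. f b + g b) a = hmult H h f a + hmult H h g a"
  by (simp add: hmult_def distrib_left distrib_right sum.distrib)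
lemma hmult_diff_left: "hmult H (\<lambda>b. f b - g b) h a = hmult H f h a - hmult H g h a"
  by (simp add: hmult_def left_diff_distrib sum_subtractf)
lemma hmult_diff_right: "hmult H h (\<lambda>b. f b - g b) a = hmult H h f a - hmult H h g a"
  by (simp add: hmult_def right_diff_distrib left_diff_distrib sum_subtractf)
lemma hmult_zero_right: "hmult H h (\<lambda>b. 0) = (\<lambda>b. 0)"
  by (simp add: hmult_def fun_eq_iff)
lemma hcomult_add: "hcomult H (\<lambda>b. f b + g b) z = hcomult H f z + hcomult H g z"
  by (simp add: hcomult_def distrib_right sum.distrib split: prod.split)
lemma hcomult_diff: "hcomult H (\<lambda>b. f b - g b) z = hcomult H f z - hcomult H g z"
  by (simp add: hcomult_def left_diff_distrib sum_subtractf split: prod.split)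

section \<open>Rows of morphisms out of a dual Hopf algebra\<close>

lemma hmult_dual_basis: "hmult (dual_hopf H) (basisvec a1) (basisvec a2) = (\<lambda>b. dc H b a1 a2)"
  by (rule ext) (simp add: hmult_def dual_hopf_def basisvec_def mult_if_zero sum_if_const cong: if_cong)

lemma hcomult_dual_basis: "hcomult (dual_hopf H) (basisvec a) = (\<lambda>(b, d). mc H b d a)"
  by (rule ext) (simp add: hcomult_def dual_hopf_def basisvec_def mult_if_zero split: prod.split cong: if_cong)

text \<open>The t-th row of the matrix of p: the functional \<open>\<delta>\<^sub>t \<circ> p\<close> on H^*, i.e. an element of H.\<close>

definition mrow :: "(('b \<Rightarrow> 'k::field) \<Rightarrow> ('c \<Rightarrow> 'k)) \<Rightarrow> 'c \<Rightarrow> 'b \<Rightarrow> 'k" where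
  "mrow p t = (\<lambda>a. p (basisvec a) t)"

lemma mrow_eq: "p (basisvec a) t = mrow p t a"
  by (simp add: mrow_def)

text \<open>For a bialgebra map p: H^* \<rightarrow> B, multiplicativity of p becomes comultiplicativity of
  its rows, comultiplicativity of p becomes multiplicativity of its rows, and the counit of B
  pulls back to the unit of H.\<close>

lemma mrow_hcomult:
  assumes "hopf_mor (dual_hopf H) B p"
  shows "hcomult H (mrow p t) (a1, a2) = hmult B (p (basisvec a1)) (p (basisvec a2)) t"
proof -
  have "hmult B (p (basisvec a1)) (p (basisvec a2)) t = p (hmult (dual_hopf H) (basisvec a1) (basisvec a2)) t"
    using assms by (simp add: hopf_mor_def)
  also have "\<dots> = p (\<lambda>b. dc H b a1 a2) t"
    by (simp only: hmult_dual_basis)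
  also have "\<dots> = (\<Sum>b\<in>UNIV. dc H b a1 a2 * p (basisvec b) t)"
    using assms by (simp add: hopf_mor_def linear_expand)
  finally show ?thesis by (simp add: hcomult_def mrow_def mult.commute)
qed

lemma mrow_hmult:
  assumes "hopf_mor (dual_hopf H) B p"
  shows "hmult H (mrow p t1) (mrow p t2) a = hcomult B (p (basisvec a)) (t1, t2)"
  using assms
  by (simp add: hopf_mor_def hcomult_dual_basis tmap_def hmult_def mrow_def sum_UNIV_prod ac_simps)

lemma mrow_hcounit:
  assumes "hopf_mor (dual_hopf H) B p"
  shows "hcounit B (p (basisvec a)) = uc H a"
  using assms
  by (simp add: hopf_mor_def hcounit_def dual_hopf_def basisvec_def mult_if_zero cong: if_cong)

section \<open>The Hopf algebra A''_4 and its dual A\<close>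

lemma A4pp_sel:
  "mc A4pp (i, j) (k, l) b = (if j \<and> l then sgn4 True k * ((if b = (i + k + 2, False) then 1 else 0) - (if b = (i + k, False) then 1 else 0))
                              else (if b = (i + k, j \<or> l) then sgn4 j k else 0))"
  "uc A4pp = basisvec (0, False)"
  "dc A4pp b (a, p) (c, q) = (if \<not> p \<and> \<not> q then (if a = c \<and> b = (a, False) then 1 else 0)
      else if p \<and> \<not> q then (if c = a + 1 \<and> b = (a, True) then 1 else 0)
      else if \<not> p \<and> q then (if c = a \<and> b = (a, True) then 1 else 0) else 0)"
  "ec A4pp (i, j) = (if j then 0 else 1)"
  "sc A4pp (m, n) b = (if n then (if b = (- m - 1, True) then (if odd4 m then -1 else 1) else 0)
                      else (if b = (- m, False) then 1 else 0))"
  by (cases b; auto simp: A4pp_def)+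

lemma dc_A4pp_source: "dc A4pp (m, n) b1 b2 =
   (if n then (if b2 = (m + 1, False) then (if b1 = (m, True) then 1 else 0) else 0)
              + (if b2 = (m, True) then (if b1 = (m, False) then 1 else 0) else 0)
    else (if b2 = (m, False) then (if b1 = (m, False) then 1 else 0) else 0))"
  by (cases b1; cases b2) (auto simp: A4pp_def)

lemma hcomult_A4pp: "hcomult A4pp f ((a, p), (c, q)) =
   (if \<not> p \<and> \<not> q then (if c = a then f (a, False) else 0)
    else if p \<and> \<not> q then (if c = a + 1 then f (a, True) else 0)
    else if \<not> p \<and> q then (if c = a then f (a, True) else 0) else 0)"
  by (cases p; cases q) (simp_all add: hcomult_def A4pp_sel mult_if_zero cong: if_cong)

lemma hmult_A4pp_group_part:
  assumes "\<And>i. f (i, True) = 0" "\<And>i. g (i, True) = 0"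
  shows "hmult A4pp f g (m, False) = (\<Sum>i\<in>UNIV. f (i, False) * g (m - i, False))"
proof -
  have shift: "(m = i + k) = (k = m - i)" for i k :: 4
    by (auto simp: algebra_simps)
  have "hmult A4pp f g (m, False) = (\<Sum>i\<in>UNIV. \<Sum>k\<in>UNIV. if k = m - i then f (i, False) * g (k, False) else 0)"
    by (simp add: hmult_def sum_UNIV_prod sum_UNIV_bool A4pp_sel assms sgn4_def shift mult_if_zero cong: if_cong)
  then show ?thesis by simp
qed

text \<open>A group-like element of A''_4 (one of 1, g, g^2, g^3) whose square is 1 is 1 or g^2;
  the argument uses char k \<noteq> 2.\<close>

lemma A4pp_grouplike_involution:
  fixes \<gamma> :: "4 \<times> bool \<Rightarrow> 'k::field_char_0"
  assumes comult: "hcomult A4pp \<gamma> = tens \<gamma> \<gamma>" and square: "hmult A4pp \<gamma> \<gamma> = hone A4pp"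
  shows "\<gamma> = basisvec (0, False) \<or> \<gamma> = basisvec (2, False)"
proof -
  have comult_pt: "hcomult A4pp \<gamma> (a, b) = \<gamma> a * \<gamma> b" for a b
    using comult by (simp add: tens_def)
  have x_part: "\<gamma> (a, True) = 0" for a
    using comult_pt[of "(a, True)" "(a, True)"] by (simp add: hcomult_A4pp)
  have idem: "\<gamma> (a, False) * \<gamma> (c, False) = (if c = a then \<gamma> (a, False) else 0)" for a c
    using comult_pt[of "(a, False)" "(c, False)"] by (simp add: hcomult_A4pp)
  have square_pt: "(\<Sum>i\<in>UNIV. \<gamma> (i, False) * \<gamma> (m - i, False)) = basisvec (0, False) (m, False)" for m
    using square hmult_A4pp_group_part[of \<gamma> \<gamma> m] x_part by (simp add: hone_def A4pp_sel)
  have sum02: "\<gamma> (0, False) + \<gamma> (2, False) = 1"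
    using square_pt[of 0] idem[of 0 0] idem[of 1 3] idem[of 2 2] idem[of 3 1]
    by (simp add: sum_UNIV_4 basisvec_def)
  have sum13: "\<gamma> (1, False) + \<gamma> (3, False) = 0"
    using square_pt[of 2] idem[of 0 2] idem[of 1 1] idem[of 2 0] idem[of 3 3]
    by (simp add: sum_UNIV_4 basisvec_def)
  have odd: "\<gamma> (1, False) = 0 \<and> \<gamma> (3, False) = 0"
  proof -
    have neg: "\<gamma> (1, False) = - \<gamma> (3, False)" using sum13 by (simp add: eq_neg_iff_add_eq_0)
    have "\<gamma> (3, False) = \<gamma> (3, False) * \<gamma> (3, False)" using idem[of 3 3] by simp
    also have "\<dots> = \<gamma> (1, False) * \<gamma> (1, False)" using neg by simp
    also have "\<dots> = \<gamma> (1, False)" using idem[of 1 1] by simp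
    finally show ?thesis using neg by simp
  qed
  have "\<gamma> (0, False) * (\<gamma> (0, False) - 1) = 0"
    using idem[of 0 0] by (simp add: right_diff_distrib)
  then have "(\<gamma> (0, False) = 1 \<and> \<gamma> (2, False) = 0) \<or> (\<gamma> (0, False) = 0 \<and> \<gamma> (2, False) = 1)"
    using sum02 by auto
  then show ?thesis
  proof
    assume vals: "\<gamma> (0, False) = 1 \<and> \<gamma> (2, False) = 0"
    have "\<gamma> = basisvec (0, False)"
    proof (rule ext, clarify)
      fix i j
      show "\<gamma> (i, j) = basisvec (0, False) (i, j)"
        using four_cases[of i] x_part odd vals by (cases j) (auto simp: basisvec_def)
    qed
    then show ?thesis ..
  next
    assume vals: "\<gamma> (0, False) = 0 \<and> \<gamma> (2, False) = 1"
    have "\<gamma> = basisvec (2, False)"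
    proof (rule ext, clarify)
      fix i j
      show "\<gamma> (i, j) = basisvec (2, False) (i, j)"
        using four_cases[of i] x_part odd vals by (cases j) (auto simp: basisvec_def)
    qed
    then show ?thesis ..
  qed
qed

text \<open>For \<gamma> \<in> {1, g^2}, a (1, \<gamma>)-skew-primitive Z of A''_4 is a multiple of 1 - \<gamma>; as
  (1 - g^2)^2 = 2 (1 - g^2) \<noteq> 0, the condition Z^2 = 0 forces Z = 0.\<close>

lemma A4pp_skew_primitive_square_zero:
  fixes Z \<gamma> :: "4 \<times> bool \<Rightarrow> 'k::field_char_0"
  assumes \<gamma>: "\<gamma> = basisvec (0, False) \<or> \<gamma> = basisvec (2, False)"
    and comult: "\<And>a1 a2. hcomult A4pp Z (a1, a2) = hone A4pp a1 * Z a2 + Z a1 * \<gamma> a2"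
    and square: "hmult A4pp Z Z = (\<lambda>_. 0)"
  shows "Z = (\<lambda>_. 0)"
proof -
  have comult_pt: "hcomult A4pp Z (a1, a2) = basisvec (0, False) a1 * Z a2 + Z a1 * \<gamma> a2" for a1 a2
    using comult by (simp add: hone_def A4pp_sel)
  have \<gamma>_vals: "\<gamma> (a, True) = 0" "\<gamma> (1, False) = 0" "\<gamma> (3, False) = 0" for a
    using \<gamma> by (auto simp: basisvec_def)
  have x_part: "Z (a, True) = 0" for a
  proof (cases "a = 0")
    case True
    then show ?thesis using comult_pt[of "(0, True)" "(1, False)"] \<gamma>_vals by (simp add: hcomult_A4pp basisvec_def)
  next
    case False
    then show ?thesis using comult_pt[of "(a, False)" "(a, True)"] \<gamma>_vals by (simp add: hcomult_A4pp basisvec_def)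
  qed
  have Z1: "Z (1, False) = 0" and Z3: "Z (3, False) = 0"
    using comult_pt[of "(1, False)" "(1, False)"] comult_pt[of "(3, False)" "(3, False)"] \<gamma>_vals
    by (simp_all add: hcomult_A4pp basisvec_def)
  have Z00: "Z (0, False) * \<gamma> (0, False) = 0"
    using comult_pt[of "(0, False)" "(0, False)"] by (simp add: hcomult_A4pp basisvec_def)
  have Z02: "Z (2, False) + Z (0, False) * \<gamma> (2, False) = 0"
    using comult_pt[of "(0, False)" "(2, False)"] by (simp add: hcomult_A4pp basisvec_def)
  have Zsq: "Z (0, False) * Z (0, False) + Z (2, False) * Z (2, False) = 0"
    using square hmult_A4pp_group_part[of Z Z 0] x_part Z1 Z3
    by (simp add: sum_UNIV_4 fun_eq_iff)
  have "Z (0, False) = 0 \<and> Z (2, False) = 0"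
    using \<gamma>
  proof
    assume "\<gamma> = basisvec (0, False)"
    then show ?thesis using Z00 Z02 by (simp add: basisvec_def)
  next
    assume "\<gamma> = basisvec (2, False)"
    then have "Z (2, False) = - Z (0, False)" using Z02 by (simp add: basisvec_def eq_neg_iff_add_eq_0)
    then have "2 * (Z (0, False) * Z (0, False)) = 0" using Zsq by simp
    then show ?thesis using \<open>Z (2, False) = - Z (0, False)\<close> by simp
  qed
  then show ?thesis
    using four_cases x_part Z1 Z3 by (auto simp: fun_eq_iff) (metis (full_types))
qed

lemma Adual_sel:
  "mc Adual = (\<lambda>b1 b2 b. dc A4pp b b1 b2)" "uc Adual = ec A4pp" "dc Adual = (\<lambda>b b1 b2. mc A4pp b1 b2 b)"
  "ec Adual = uc A4pp" "sc Adual = (\<lambda>b b'. sc A4pp b' b)"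
  by (simp_all add: Adual_def dual_hopf_def)

lemma hmult_A: "hmult (Adual::(4 \<times> bool, 'k::field) hopf_sc) u v (m, n) =
   (if n then u (m, True) * v (m + 1, False) + u (m, False) * v (m, True) else u (m, False) * v (m, False))"
  by (cases n) (simp_all add: hmult_def Adual_sel dc_A4pp_source distrib_left sum.distrib mult_if_zero)

lemma hcomult_A: "hcomult (Adual::(4 \<times> bool, 'k::field) hopf_sc) u ((i, j), (k, l)) =
   (if j \<and> l then sgn4 True k * (u (i + k + 2, False) - u (i + k, False)) else sgn4 j k * u (i + k, j \<or> l))"
  by (cases j; cases l)
     (simp_all add: hcomult_def Adual_sel A4pp_sel sum_subtractf mult_if_zero algebra_simps cong: if_cong)

lemma hcounit_A: "hcounit (Adual::(4 \<times> bool, 'k::field) hopf_sc) u = u (0, False)"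
  by (simp add: hcounit_def Adual_sel A4pp_sel basisvec_def mult_if_zero cong: if_cong)

lemma hone_A: "hone (Adual::(4 \<times> bool, 'k::field) hopf_sc) = (\<lambda>(i, j). if j then 0 else 1)"
  by (rule ext) (auto simp: hone_def Adual_sel A4pp_sel)

lemma hantipode_A: "hantipode (Adual::(4 \<times> bool, 'k::field) hopf_sc) u (m, n) =
   (if n then (if odd4 m then -1 else 1) * u (- m - 1, True) else u (- m, False))"
  by (cases n) (simp_all add: hantipode_def Adual_sel A4pp_sel mult_if_zero algebra_simps cong: if_cong)

section \<open>The Hopf subalgebra T generated by \<alpha> and y\<close>

text \<open>T consists of the functionals on A''_4 that are invariant under multiplication by g^2.\<close>

definition g2_invariant :: "(4 \<times> bool \<Rightarrow> 'k::field) set" where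
  "g2_invariant = {h. \<forall>i j. h (i + 2, j) = h (i, j)}"

lemma g2_invariant_iff: "h \<in> g2_invariant \<longleftrightarrow>
   h (2, False) = h (0, False) \<and> h (3, False) = h (1, False) \<and> h (2, True) = h (0, True) \<and> h (3, True) = h (1, True)"
proof
  assume "h \<in> g2_invariant"
  then have "\<And>i j. h (i + 2, j) = h (i, j)" by (simp add: g2_invariant_def)
  from this[of 0] this[of 1] show "h (2, False) = h (0, False) \<and> h (3, False) = h (1, False) \<and> h (2, True) = h (0, True) \<and> h (3, True) = h (1, True)"
    by simp
next
  assume "h (2, False) = h (0, False) \<and> h (3, False) = h (1, False) \<and> h (2, True) = h (0, True) \<and> h (3, True) = h (1, True)"
  then have "h (i + 2, j) = h (i, j)" for i j
    using four_cases[of i] by (cases j) auto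
  then show "h \<in> g2_invariant" by (simp add: g2_invariant_def)
qed

text \<open>The coproduct of an invariant functional lies in g2_invariant \<otimes> g2_invariant; we write it
  explicitly via the indicator functionals of the cosets of {1, g^2}.\<close>

definition coset_ind :: "4 \<Rightarrow> bool \<Rightarrow> 4 \<times> bool \<Rightarrow> 'k::field" where
  "coset_ind r j = (\<lambda>(i, j'). if j' = j \<and> (i = r \<or> i = r + 2) then 1 else 0)"

lemma hcomult_g2_invariant:
  assumes u: "u \<in> g2_invariant"
  shows "hcomult Adual u \<in> lspan {tens v w | v w. v \<in> g2_invariant \<and> w \<in> g2_invariant}"
proof -
  let ?S = "{tens v w | v w. v \<in> g2_invariant \<and> w \<in> g2_invariant}"
  let ?L = "\<lambda>b d. hcomult Adual u (b, d)"
  have slice: "?L (r, j) \<in> g2_invariant" for r j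
    using u four_cases[of r] by (cases j) (auto simp: g2_invariant_iff hcomult_A)
  have summand: "tens (coset_ind r j) (?L (r, j)) \<in> lspan ?S" if "r = 0 \<or> r = 1" for r j
  proof -
    have "coset_ind r j \<in> g2_invariant"
      using that by (auto simp: g2_invariant_iff coset_ind_def)
    then show ?thesis using slice by (intro lspan_base) blast
  qed
  have decomp: "hcomult Adual u = (\<lambda>z. (\<lambda>z. (\<lambda>z. tens (coset_ind 0 False) (?L (0, False)) z + tens (coset_ind 0 True) (?L (0, True)) z) z
      + tens (coset_ind 1 False) (?L (1, False)) z) z + tens (coset_ind 1 True) (?L (1, True)) z)"
  proof (rule ext, clarify)
    fix i j k l
    show "hcomult Adual u ((i, j), k, l) = tens (coset_ind 0 False) (?L (0, False)) ((i, j), k, l) + tens (coset_ind 0 True) (?L (0, True)) ((i, j), k, l)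
      + tens (coset_ind 1 False) (?L (1, False)) ((i, j), k, l) + tens (coset_ind 1 True) (?L (1, True)) ((i, j), k, l)"
      using u four_cases[of i] four_cases[of k] unfolding g2_invariant_iff
      by (elim conjE disjE; cases j; cases l; simp add: hcomult_A tens_def coset_ind_def)
  qed
  show ?thesis by (subst decomp) (intro lspan_add summand; simp)
qed

lemma hopf_subalg_g2_invariant: "hopf_subalg Adual (g2_invariant::(4 \<times> bool \<Rightarrow> 'k::field) set)"
proof -
  have "lsubspace (g2_invariant::(4 \<times> bool \<Rightarrow> 'k) set)"
    by (simp add: lsubspace_def g2_invariant_def)
  moreover have "hone Adual \<in> g2_invariant"
    by (simp add: g2_invariant_iff hone_A)
  moreover have "hmult Adual u v \<in> g2_invariant"
    if "u \<in> g2_invariant" "v \<in> (g2_invariant::(4 \<times> bool \<Rightarrow> 'k) set)" for u v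
    using that by (simp add: g2_invariant_iff hmult_A)
  moreover have "hantipode Adual u \<in> g2_invariant" if "u \<in> (g2_invariant::(4 \<times> bool \<Rightarrow> 'k) set)" for u
    using that by (simp add: g2_invariant_iff hantipode_A)
  ultimately show ?thesis
    unfolding hopf_subalg_def using hcomult_g2_invariant by blast
qed

text \<open>The generator y = e11 e21 is minus the functional x^* + g x^* + g^2 x^* + g^3 x^*; this uses
  a square root i of -1 in k, which exists since k is algebraically closed.\<close>

lemma imag_sq: "(imag::'k::alg_closed_field) * imag = -1"
proof -
  have "\<exists>x::'k. (\<Sum>k\<le>2. (\<lambda>k. if k = 1 then 0 else 1) k * x ^ k) = 0"
    by (rule alg_closed) simp_all
  then obtain x :: 'k where "(\<Sum>k\<le>2. (\<lambda>k. if k = (1::nat) then 0 else 1) k * x ^ k) = 0" by blast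
  then have "x * x = -1" by (simp add: numeral_2_eq_2 power2_eq_square eq_neg_iff_add_eq_0 add.commute)
  then show ?thesis unfolding imag_def by (rule someI)
qed

lemma mpow_rho_g: "mpow rho_g n r c = (if r \<noteq> c then 0 else if r = False then imag ^ n else (- imag) ^ n)"
  by (induct n arbitrary: r c) (auto simp: mid_def mmul_def sum_UNIV_bool rho_g_def)

definition y_gen :: "4 \<times> bool \<Rightarrow> 'k::field" where
  "y_gen = (\<lambda>(i, j). if j then -1 else 0)"

lemma e11_e21: "hmult Adual (e11::4 \<times> bool \<Rightarrow> 'k::alg_closed_field) e21 = y_gen"
proof (rule ext, clarify)
  fix m :: 4 and n :: bool
  have unit: "(imag::'k) ^ q * (- imag) ^ q = 1" for q
    using imag_sq[where 'k='k] by (simp flip: power_mult_distrib)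
  show "hmult Adual (e11::4 \<times> bool \<Rightarrow> 'k) e21 (m, n) = y_gen (m, n)"
    by (cases n) (simp_all add: hmult_A e11_def e21_def ecoord_def rho_def mmul_def sum_UNIV_bool
        mpow_rho_g rho_x_def mid_def unit y_gen_def)
qed

text \<open>Conversely every invariant functional is a combination of 1, \<alpha>, y and \<alpha> y, so any Hopf
  subalgebra containing \<alpha> and y contains g2_invariant.\<close>

lemma g2_invariant_span:
  assumes K: "hopf_subalg Adual K" and a: "alpha \<in> K" and y: "y_gen \<in> K"
    and h: "h \<in> (g2_invariant :: (4 \<times> bool \<Rightarrow> 'k::field_char_0) set)"
  shows "h \<in> K"
proof -
  have sub: "lsubspace K" and one: "hone Adual \<in> K" and ay: "hmult Adual alpha y_gen \<in> K"
    using K a y by (auto simp: hopf_subalg_def)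
  define c1 where "c1 = (h (0, False) + h (1, False)) / 2"
  define c2 where "c2 = (h (0, False) - h (1, False)) / 2"
  define c3 where "c3 = - (h (0, True) + h (1, True)) / 2"
  define c4 where "c4 = (h (1, True) - h (0, True)) / 2"
  have "h (i, j) = c1 * hone Adual (i, j) + c2 * alpha (i, j) + c3 * y_gen (i, j) + c4 * hmult Adual alpha y_gen (i, j)" for i j
    using h four_cases[of i] unfolding g2_invariant_iff
    by (cases j; elim conjE disjE) (simp_all add: hone_A hmult_A alpha_def y_gen_def c1_def c2_def c3_def c4_def field_simps)
  then have "h = (\<lambda>x. (\<lambda>x. (\<lambda>x. c1 * hone Adual x + c2 * alpha x) x + c3 * y_gen x) x + c4 * hmult Adual alpha y_gen x)"
    by (intro ext) auto
  also have "\<dots> \<in> K"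
    by (intro lsubspace_add[OF sub] lsubspace_scale[OF sub] one a y ay)
  finally show ?thesis .
qed

theorem T_eq_g2_invariant:
  "hopf_gen Adual {alpha, hmult Adual e11 e21} = (g2_invariant::(4 \<times> bool \<Rightarrow> 'k::{alg_closed_field, field_char_0}) set)"
proof
  show "hopf_gen Adual {alpha, hmult Adual e11 e21} \<subseteq> (g2_invariant::(4 \<times> bool \<Rightarrow> 'k) set)"
    unfolding hopf_gen_def e11_e21 using hopf_subalg_g2_invariant
    by (intro Inter_lower) (auto simp: g2_invariant_iff alpha_def y_gen_def)
  show "(g2_invariant::(4 \<times> bool \<Rightarrow> 'k) set) \<subseteq> hopf_gen Adual {alpha, hmult Adual e11 e21}"
    unfolding hopf_gen_def e11_e21 using g2_invariant_span by blast
qed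

section \<open>The exact sequence T \<hookrightarrow> A \<twoheadrightarrow> k[C_2]\<close>

lemma group_alg_C2:
  "hmult (group_alg::(2, 'k::field) hopf_sc) p q c = (if c = 0 then p 0 * q 0 + p 1 * q 1 else p 0 * q 1 + p 1 * q 0)"
  "hcomult (group_alg::(2, 'k) hopf_sc) w (a, b) = (if a = b then w a else 0)"
  "hcounit (group_alg::(2, 'k) hopf_sc) w = w 0 + w 1"
  "hone (group_alg::(2, 'k) hopf_sc) = basisvec 0"
  using two_cases[of a] two_cases[of b] two_cases[of c]
  by (auto simp: hmult_def hcomult_def hcounit_def hone_def group_alg_def sum_UNIV_2)

text \<open>\<psi> restricts a functional to k[g^2] = k[C_2] \<subseteq> A''_4 and writes the result in the basis of
  primitive idempotents of k[C_2]^* \<cong> k[C_2].\<close>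

definition psi :: "(4 \<times> bool \<Rightarrow> 'k::field) \<Rightarrow> (2 \<Rightarrow> 'k)" where
  "psi u = (\<lambda>t. if t = 0 then (u (0, False) + u (2, False)) / 2 else (u (0, False) - u (2, False)) / 2)"

lemma psi_basisvec: "psi (basisvec b) t =
   (if b = (0, False) then 1 / 2 else if b = (2, False) then (if t = 0 then 1 / 2 else - 1 / 2) else (0::'k::field))"
  by (auto simp: psi_def basisvec_def)

lemma is_linear_psi: "is_linear psi"
  unfolding is_linear_def by (auto simp: fun_eq_iff psi_def add_divide_distrib diff_divide_distrib algebra_simps)

lemma hopf_mor_psi: "hopf_mor (Adual::(4 \<times> bool, 'k::field_char_0) hopf_sc) group_alg psi"
  unfolding hopf_mor_def
proof (intro conjI allI is_linear_psi)
  fix u v :: "4 \<times> bool \<Rightarrow> 'k"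
  show "psi (hmult Adual u v) = hmult group_alg (psi u) (psi v)"
    using two_cases by (intro ext) (auto simp: group_alg_C2 psi_def hmult_A field_simps)
  show "psi (hone (Adual::(4 \<times> bool, 'k) hopf_sc)) = hone group_alg"
    using two_cases by (intro ext) (auto simp: group_alg_C2 psi_def hone_A basisvec_def)
  show "hcomult group_alg (psi u) = tmap psi psi (hcomult Adual u)"
  proof (rule ext, clarify)
    fix a b :: 2
    show "hcomult group_alg (psi u) (a, b) = tmap psi psi (hcomult Adual u) (a, b)"
      using two_cases[of a] two_cases[of b]
      by (simp only: tmap_def psi_basisvec split_def fst_conv snd_conv)
         (auto simp: group_alg_C2 sum_UNIV_prod sum_UNIV_4 sum_UNIV_bool hcomult_A psi_def field_simps)
  qed
  show "hcounit group_alg (psi u) = hcounit Adual u"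
    by (simp add: group_alg_C2 hcounit_A psi_def field_simps)
qed

lemma surj_psi: "surj (psi::(4 \<times> bool \<Rightarrow> 'k::field_char_0) \<Rightarrow> _)"
proof (rule surjI)
  fix p :: "2 \<Rightarrow> 'k"
  show "psi (\<lambda>(i, j). if j then 0 else if i = 0 then p 0 + p 1 else if i = 2 then p 0 - p 1 else 0) = p"
    using two_cases by (intro ext) (auto simp: psi_def)
qed

lemma psi_on_g2_invariant:
  "(t::4 \<times> bool \<Rightarrow> 'k::field_char_0) \<in> g2_invariant \<Longrightarrow> psi t = (\<lambda>c. hcounit Adual t * hone group_alg c)"
  by (rule ext) (auto simp: psi_def g2_invariant_iff hcounit_A group_alg_C2 basisvec_def)

lemma psi_eq_zero_iff: "psi (u::4 \<times> bool \<Rightarrow> 'k::field_char_0) = (\<lambda>_. 0) \<longleftrightarrow> u (0, False) = 0 \<and> u (2, False) = 0"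
proof
  assume "psi u = (\<lambda>_. 0)"
  then have "psi u 0 = 0" "psi u 1 = 0" by auto
  then have "u (0, False) + u (2, False) = 0" "u (0, False) - u (2, False) = 0" by (simp_all add: psi_def)
  then show "u (0, False) = 0 \<and> u (2, False) = 0" by (simp add: algebra_simps)
qed (simp add: psi_def fun_eq_iff)

lemma ker_psi: "{u. psi u = (\<lambda>_. 0)} =
    lspan {hmult Adual t a | t a. t \<in> (g2_invariant::(4 \<times> bool \<Rightarrow> 'k::field_char_0) set) \<and> hcounit Adual t = 0}"
proof
  let ?S = "{hmult Adual t a | t a. t \<in> (g2_invariant::(4 \<times> bool \<Rightarrow> 'k) set) \<and> hcounit Adual t = 0}"
  have "lsubspace {u::4 \<times> bool \<Rightarrow> 'k. psi u = (\<lambda>_. 0)}"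
    unfolding lsubspace_def psi_eq_zero_iff by auto
  moreover have "?S \<subseteq> {u. psi u = (\<lambda>_. 0)}"
    by (auto simp: psi_eq_zero_iff hmult_A g2_invariant_iff hcounit_A)
  ultimately show "lspan ?S \<subseteq> {u. psi u = (\<lambda>_. 0)}"
    by (rule lspan_in_subspace)
  show "{u. psi u = (\<lambda>_. 0)} \<subseteq> lspan ?S"
  proof
    fix u :: "4 \<times> bool \<Rightarrow> 'k" assume "u \<in> {u. psi u = (\<lambda>_. 0)}"
    then have u0: "u (0, False) = 0" "u (2, False) = 0" by (auto simp: psi_eq_zero_iff)
    \<comment> \<open>u = (g^* + g^3{}^*) \<cdot> a1 + (\<Sum>_i x g^i{}^*) \<cdot> a2\<close>
    define t1 :: "4 \<times> bool \<Rightarrow> 'k" where "t1 = (\<lambda>(i, j). if \<not> j \<and> (i = 1 \<or> i = 3) then 1 else 0)"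
    define a1 :: "4 \<times> bool \<Rightarrow> 'k" where "a1 = (\<lambda>(i, j). if j then 0 else u (i, False))"
    define t2 :: "4 \<times> bool \<Rightarrow> 'k" where "t2 = (\<lambda>(i, j). if j then 1 else 0)"
    define a2 :: "4 \<times> bool \<Rightarrow> 'k" where "a2 = (\<lambda>(k, j). if j then 0 else u (k - 1, True))"
    have "u (i, j) = hmult Adual t1 a1 (i, j) + hmult Adual t2 a2 (i, j)" for i j
      using four_cases[of i] u0 by (cases j) (auto simp: hmult_A t1_def a1_def t2_def a2_def)
    then have decomp: "u = (\<lambda>z. hmult Adual t1 a1 z + hmult Adual t2 a2 z)"
      by (intro ext) auto
    have "hmult Adual t1 a1 \<in> ?S" "hmult Adual t2 a2 \<in> ?S"
      by (auto simp: t1_def t2_def g2_invariant_iff hcounit_A)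
    then show "u \<in> lspan ?S"
      by (subst decomp) (intro lspan_add lspan_base)
  qed
qed

text \<open>(id \<otimes> \<psi>) \<Delta>(h) records h together with its translate by g^2, so the coinvariants of
  \<psi> are exactly the g^2-invariant functionals.\<close>

lemma coinv_psi_pointwise: "tmap (\<lambda>u. u) psi (hcomult (Adual::(4 \<times> bool, 'k::field) hopf_sc) h) ((i, j), t) =
   (if t = 0 then (h (i, j) + h (i + 2, j)) / 2 else (h (i, j) - h (i + 2, j)) / 2)"
  unfolding tmap_id_slice[OF is_linear_psi] psi_def by (simp add: hcomult_A)

lemma coinv_psi: "coinv Adual group_alg psi = (g2_invariant::(4 \<times> bool \<Rightarrow> 'k::field_char_0) set)"
proof -
  have "h \<in> coinv Adual group_alg psi \<longleftrightarrow> (\<forall>i j. h (i + 2, j) = h (i, j))" for h :: "4 \<times> bool \<Rightarrow> 'k"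
  proof -
    have "h \<in> coinv Adual group_alg psi \<longleftrightarrow>
        (\<forall>i j t. tmap (\<lambda>u. u) psi (hcomult Adual h) ((i, j), t) = tens h (hone group_alg) ((i, j), t))"
      by (auto simp: coinv_def fun_eq_iff)
    also have "\<dots> \<longleftrightarrow> (\<forall>i j. h (i + 2, j) = h (i, j))"
      using two_cases
      by (auto simp: coinv_psi_pointwise tens_def group_alg_C2 basisvec_def)
    finally show ?thesis .
  qed
  then show ?thesis by (auto simp: g2_invariant_def)
qed

theorem exact_seq_psi:
  "exact_seq_incl (Adual::(4 \<times> bool, 'k::field_char_0) hopf_sc) g2_invariant (group_alg::(2, 'k) hopf_sc) psi"
  unfolding exact_seq_incl_def
  using hopf_subalg_g2_invariant hopf_mor_psi surj_psi psi_on_g2_invariant ker_psi coinv_psi by blast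

section \<open>Hopf algebra maps A \<rightarrow> T_{-1}\<close>

lemma Tsw_structure:
  "hmult (Tsw::(2 \<times> bool, 'k::field) hopf_sc) p q (k, n) = (if n then
     (if k = 0 then p (0, False) * q (0, True) + p (1, False) * q (1, True) + p (0, True) * q (0, False) - p (1, True) * q (1, False)
      else p (0, False) * q (1, True) + p (1, False) * q (0, True) - p (0, True) * q (1, False) + p (1, True) * q (0, False))
   else (if k = 0 then p (0, False) * q (0, False) + p (1, False) * q (1, False)
         else p (0, False) * q (1, False) + p (1, False) * q (0, False)))"
  "hcomult (Tsw::(2 \<times> bool, 'k) hopf_sc) w ((a, l), (c, l')) =
   (if \<not> l \<and> \<not> l' then (if a = c then w (a, False) else 0)
    else if l \<and> \<not> l' then (if c = a + 1 then w (a, True) else 0)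
    else if \<not> l \<and> l' then (if c = a then w (a, True) else 0) else 0)"
  "hcounit (Tsw::(2 \<times> bool, 'k) hopf_sc) w = w (0, False) + w (1, False)"
  "hone (Tsw::(2 \<times> bool, 'k) hopf_sc) = basisvec (0, False)"
  using two_cases[of k] two_cases[of a] two_cases[of c]
  by (cases n; cases l; cases l'; auto simp: hmult_def hcomult_def hcounit_def hone_def Tsw_def
      sum_UNIV_prod sum_UNIV_2 sum_UNIV_bool)+

lemma grouplike_Tsw: "grouplike (Tsw::(2 \<times> bool, 'k::field) hopf_sc) (basisvec (k, False))"
  unfolding grouplike_def
proof
  show "basisvec (k, False) \<noteq> (\<lambda>_. 0::'k)"
    by (metis basisvec_def zero_neq_one)
  show "hcomult Tsw (basisvec (k, False)) = tens (basisvec (k, False)) (basisvec (k, False) :: _ \<Rightarrow> 'k)"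
    by (rule ext, clarify) (auto simp: Tsw_structure tens_def basisvec_def)
qed

text \<open>For a Hopf map p: A \<rightarrow> T_{-1}, the rows of p for the coordinates 1, g, x, gx of T_{-1}
  are elements of A''_4. Two combinations of them matter: the image of the group-like
  1^* - g^* of T_{-1}^*, and the image of the skew-primitive x^* + (gx)^*.\<close>

definition grouplike_row :: "((4 \<times> bool \<Rightarrow> 'k::field) \<Rightarrow> (2 \<times> bool \<Rightarrow> 'k)) \<Rightarrow> 4 \<times> bool \<Rightarrow> 'k" where
  "grouplike_row p = (\<lambda>a. mrow p (0, False) a - mrow p (1, False) a)"

definition skew_row :: "((4 \<times> bool \<Rightarrow> 'k::field) \<Rightarrow> (2 \<times> bool \<Rightarrow> 'k)) \<Rightarrow> 4 \<times> bool \<Rightarrow> 'k" where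
  "skew_row p = (\<lambda>a. mrow p (0, True) a + mrow p (1, True) a)"

text \<open>Multiplicativity of p makes grouplike_row p group-like and skew_row p a
  (1, grouplike_row p)-skew-primitive in A''_4; the counit of T_{-1} pulls back to the unit.\<close>

lemma Sweedler_rows_comult:
  fixes p :: "(4 \<times> bool \<Rightarrow> 'k::field) \<Rightarrow> (2 \<times> bool \<Rightarrow> 'k)"
  assumes p: "hopf_mor Adual Tsw p"
  shows "mrow p (0, False) a + mrow p (1, False) a = hone A4pp a"
    and "hcomult A4pp (grouplike_row p) = tens (grouplike_row p) (grouplike_row p)"
    and "hcomult A4pp (skew_row p) (a1, a2) = hone A4pp a1 * skew_row p a2 + skew_row p a1 * grouplike_row p a2"
proof -
  have p': "hopf_mor (dual_hopf A4pp) Tsw p" using p by (simp add: Adual_def)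
  show counit: "mrow p (0, False) a + mrow p (1, False) a = hone A4pp a" for a
    using mrow_hcounit[OF p', of a] by (simp add: Tsw_structure mrow_eq hone_def)
  have mult: "hcomult A4pp (mrow p t) (a1, a2) = hmult Tsw (p (basisvec a1)) (p (basisvec a2)) t" for t a1 a2
    by (rule mrow_hcomult[OF p'])
  show "hcomult A4pp (grouplike_row p) = tens (grouplike_row p) (grouplike_row p)"
    by (rule ext, clarify) (simp add: grouplike_row_def hcomult_diff mult Tsw_structure tens_def mrow_eq algebra_simps)
  show "hcomult A4pp (skew_row p) (a1, a2) = hone A4pp a1 * skew_row p a2 + skew_row p a1 * grouplike_row p a2"
    using counit[of a1, symmetric]
    by (simp add: skew_row_def grouplike_row_def hcomult_add mult Tsw_structure mrow_eq algebra_simps)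
qed

text \<open>Comultiplicativity of p makes grouplike_row p an involution and skew_row p square-zero
  in A''_4, and expresses the x-rows of p through skew_row p.\<close>

lemma Sweedler_rows_mult:
  fixes p :: "(4 \<times> bool \<Rightarrow> 'k::field) \<Rightarrow> (2 \<times> bool \<Rightarrow> 'k)"
  assumes p: "hopf_mor Adual Tsw p"
  shows "hmult A4pp (grouplike_row p) (grouplike_row p) = hone A4pp"
    and "hmult A4pp (skew_row p) (skew_row p) = (\<lambda>_. 0)"
    and "mrow p (i, True) = hmult A4pp (mrow p (i, False)) (skew_row p)"
proof -
  have p': "hopf_mor (dual_hopf A4pp) Tsw p" using p by (simp add: Adual_def)
  have rows: "hmult A4pp (mrow p (i, l)) (mrow p (k, l')) a = hcomult Tsw (p (basisvec a)) ((i, l), (k, l'))"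
    for i k l l' a
    by (rule mrow_hmult[OF p'])
  show "hmult A4pp (grouplike_row p) (grouplike_row p) = hone A4pp"
    using Sweedler_rows_comult(1)[OF p]
    by (intro ext) (simp add: grouplike_row_def hmult_diff_left hmult_diff_right rows Tsw_structure mrow_eq)
  show "hmult A4pp (skew_row p) (skew_row p) = (\<lambda>_. 0)"
    by (intro ext) (simp add: skew_row_def hmult_add_left hmult_add_right rows Tsw_structure)
  show "mrow p (i, True) = hmult A4pp (mrow p (i, False)) (skew_row p)"
    using two_cases[of i]
    by (intro ext) (auto simp: skew_row_def hmult_add_right rows Tsw_structure mrow_eq)
qed

lemma Sweedler_morphism_shape:
  fixes p :: "(4 \<times> bool \<Rightarrow> 'k::field_char_0) \<Rightarrow> (2 \<times> bool \<Rightarrow> 'k)"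
  assumes p: "hopf_mor Adual Tsw p"
  obtains m :: 4 where "m = 0 \<or> m = 2"
    and "\<And>u k l. p u (k, l) = (if l then 0 else (u (0, False) + (if k = 0 then 1 else -1) * u (m, False)) / 2)"
proof -
  have involution: "grouplike_row p = basisvec (0, False) \<or> grouplike_row p = basisvec (2, False)"
    using Sweedler_rows_comult(2)[OF p] Sweedler_rows_mult(1)[OF p]
    by (rule A4pp_grouplike_involution)
  then obtain m where m: "m = 0 \<or> m = 2" and \<gamma>_m: "grouplike_row p = basisvec (m, False)"
    by blast
  have "skew_row p = (\<lambda>_. 0)"
    using involution Sweedler_rows_comult(3)[OF p] Sweedler_rows_mult(2)[OF p]
    by (rule A4pp_skew_primitive_square_zero)
  then have x_rows: "mrow p (k, True) a = 0" for k a
    using Sweedler_rows_mult(3)[OF p, of k] by (simp add: hmult_zero_right)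
  have g_rows: "mrow p (k, False) a = (basisvec (0, False) a + (if k = 0 then 1 else -1) * basisvec (m, False) a) / 2" for k a
    using Sweedler_rows_comult(1)[OF p, of a] fun_cong[OF \<gamma>_m, of a] two_cases[of k]
    by (auto simp: grouplike_row_def hone_def A4pp_sel field_simps)
  have "p u (k, l) = (if l then 0 else (u (0, False) + (if k = 0 then 1 else -1) * u (m, False)) / 2)" for u k l
  proof -
    have "p u (k, l) = (\<Sum>a\<in>UNIV. u a * mrow p (k, l) a)"
      using p by (simp add: hopf_mor_def linear_expand mrow_def)
    also have "\<dots> = (if l then 0 else
        ((\<Sum>a\<in>UNIV. u a * basisvec (0, False) a) + (if k = 0 then 1 else -1) * (\<Sum>a\<in>UNIV. u a * basisvec (m, False) a)) / 2)"
      by (cases l) (simp_all add: x_rows g_rows algebra_simps sum.distrib sum_distrib_left sum_divide_distrib[symmetric])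
    finally show ?thesis by (simp only: sum_basisvec)
  qed
  with m show ?thesis by (rule that)
qed

theorem mor_to_Sweedler:
  fixes p :: "(4 \<times> bool \<Rightarrow> 'k::field_char_0) \<Rightarrow> (2 \<times> bool \<Rightarrow> 'k)"
  assumes p: "hopf_mor Adual Tsw p"
  shows "p ` UNIV \<subseteq> kG Tsw" and "g2_invariant \<subseteq> coinv Adual Tsw p"
proof -
  obtain m :: 4 where m: "m = 0 \<or> m = 2"
    and shape: "\<And>u k l. p u (k, l) = (if l then 0 else (u (0, False) + (if k = 0 then 1 else -1) * u (m, False)) / 2)"
    using Sweedler_morphism_shape[OF p] by blast
  show "p ` UNIV \<subseteq> kG Tsw"
  proof clarify
    fix u
    have "p u = (\<lambda>x. p u (0, False) * basisvec (0, False) x + p u (1, False) * basisvec (1, False) x)"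
    proof (rule ext, clarify)
      fix k :: 2 and l
      show "p u (k, l) = p u (0, False) * basisvec (0, False) (k, l) + p u (1, False) * basisvec (1, False) (k, l)"
        using two_cases[of k] shape[of u] by (cases l) (auto simp: basisvec_def)
    qed
    also have "\<dots> \<in> kG Tsw"
      unfolding kG_def by (intro lspan_add lspan_scale lspan_base) (simp_all add: grouplike_Tsw)
    finally show "p u \<in> kG Tsw" .
  qed
  show "g2_invariant \<subseteq> coinv Adual Tsw p"
  proof
    fix h :: "4 \<times> bool \<Rightarrow> 'k" assume "h \<in> g2_invariant"
    then have inv: "h (i + m, j) = h (i, j)" for i j
      using m by (auto simp: g2_invariant_def)
    have lin: "is_linear p" using p by (simp add: hopf_mor_def)
    have "tmap (\<lambda>u. u) p (hcomult Adual h) ((i, j), (k, l)) = tens h (hone Tsw) ((i, j), (k, l))" for i j k l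
      using m two_cases[of k]
      by (auto simp: tmap_id_slice[OF lin] shape hcomult_A inv tens_def Tsw_structure basisvec_def)
    then show "h \<in> coinv Adual Tsw p"
      by (auto simp: coinv_def fun_eq_iff)
  qed
qed

theorem lemma3p4:
  fixes T :: "(4 \<times> bool \<Rightarrow> 'k::{alg_closed_field, field_char_0}) set"
  defines "T \<equiv> hopf_gen Adual {alpha, hmult Adual e11 e21}"
  shows "(\<forall>\<pi>. hopf_mor (Adual :: (4 \<times> bool, 'k) hopf_sc) (Tsw :: (2 \<times> bool, 'k) hopf_sc) \<pi> \<longrightarrow>
              \<pi> ` UNIV \<subseteq> kG (Tsw :: (2 \<times> bool, 'k) hopf_sc) \<and> T \<subseteq> coinv Adual Tsw \<pi>)
       \<and> (\<exists>\<psi>. exact_seq_incl (Adual :: (4 \<times> bool, 'k) hopf_sc) T (group_alg :: (2, 'k) hopf_sc) \<psi>)"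
proof -
  have T: "T = g2_invariant"
    unfolding T_def by (rule T_eq_g2_invariant)
  show ?thesis
    unfolding T using mor_to_Sweedler exact_seq_psi by blast
qed

end
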